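(* Consider Algorithm SS-SQP (described in the context) under the standing assumptions (A1), (A2). For all $k\in\mathbb{N}$, $$\Delta l(x_k,\bar\tau_k,\bar g_k,\bar d_k)\ge\bar\tau_k\max\{\bar d_k^TH_k\bar d_k,0\}+\sigma\|c_k\|_1.$$ Furthermore, if $\bar\tau_k\ne\bar\tau_{k-1}$, then $0<\bar\tau_k\le(1-\epsilon_\tau)\bar\tau_{k-1}$.
   Context: Problem: $\min_{x\in\mathbb{R}^n}f(x)$ s.t. $c(x)=0$ with $f,c$ continuously differentiable, $c:\mathbb{R}^n\to\mathbb{R}^m$, $m\le n$; $c_k=c(x_k)$, $J_k=\nabla c(x_k)^T$. $\Delta l(x,\tau,g,d)=-\tau g^Td+\|c(x)\|_1$. Standing assumption (A1): there is an open convex set $\mathcal{X}$ containing all iterates and trial iterates; $f$ bounded below, $\nabla f$ $L$-Lipschitz and bounded, $c$ bounded, each $\nabla c_i$ Lipschitz and bounded on $\mathcal{X}$; singular values of $\nabla c(x)^T$ bounded away from zero on $\mathcal{X}$. (A2): $H_k$ symmetric, chosen independently of $\bar g_k$, $\|H_k\|\le\kappa_H$, $u^TH_ku\ge\zeta\|u\|^2$ for $u\in\mathrm{Null}(J_k)$, $\kappa_H,\zeta>0$. Algorithm SS-SQP: inputs $x_0$, $\bar\tau_{-1}>0$, $\alpha_{\max}\in(0,1]$, $\alpha_0\in(0,\alpha_{\max}]$, $\epsilon_f\ge0$, $\gamma,\theta,\sigma,\epsilon_\tau\in(0,1)$. At iteration $k$: random gradient estimate $\bar g_k\in\mathbb{R}^n$;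 solve $\begin{bmatrix}H_k & J_k^T\\ J_k&0\end{bmatrix}\begin{bmatrix}\bar d_k\\ \bar y_k\end{bmatrix}=-\begin{bmatrix}\bar g_k\\ c_k\end{bmatrix}$; $\bar\tau_k^{\rm trial}=\infty$ if $\bar g_k^T\bar d_k+\max\{\bar d_k^TH_k\bar d_k,0\}\le0$, else $(1-\sigma)\|c_k\|_1/(\bar g_k^T\bar d_k+\max\{\bar d_k^TH_k\bar d_k,0\})$; $\bar\tau_k=\bar\tau_{k-1}$ if $\bar\tau_{k-1}\le\bar\tau_k^{\rm trial}$, else $\bar\tau_k=\min\{(1-\epsilon_\tau)\bar\tau_{k-1},\bar\tau_k^{\rm trial}\}$; $x_k^+=x_k+\alpha_k\bar d_k$; with objective estimates $\bar f$ and $\bar\phi(x,\tau;\xi)=\tau\bar f(x;\xi)+\|c(x)\|_1$, set $x_{k+1}=x_k^+$, $\alpha_{k+1}=\min\{\alpha_{\max},\alpha_k/\gamma\}$ if $\bar\phi(x_k^+,\bar\tau_k;\xi_k^+)\le\bar\phi(x_k,\bar\tau_k;\xi_k^0)-\alpha_k\theta\Delta l(x_k,\bar\tau_k,\bar g_k,\bar d_k)+2\bar\tau_k\epsilon_f$, else $x_{k+1}=x_k$, $\alpha_{k+1}=\gamma\alpha_k$. *)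

theory Defs
  imports "HOL-Analysis.Analysis"
begin

definition l1norm :: "real^'m \<Rightarrow> real" where
  "l1norm v = (\<Sum>i\<in>UNIV. \<bar>v $ i\<bar>)"

definition Delta_l :: "(real^'n \<Rightarrow> real^'m) \<Rightarrow> real^'n \<Rightarrow> real \<Rightarrow> real^'n \<Rightarrow> real^'n \<Rightarrow> real" where
  "Delta_l c x tau g d = - tau * (g \<bullet> d) + l1norm (c x)"

definition tau_trial :: "real \<Rightarrow> real^'n^'n \<Rightarrow> real^'n \<Rightarrow> real^'n \<Rightarrow> real \<Rightarrow> ereal" where
  "tau_trial sig H g d cnorm =
     (if g \<bullet> d + max (d \<bullet> (H *v d)) 0 \<le> 0 then \<infinity>
      else ereal ((1 - sig) * cnorm / (g \<bullet> d + max (d \<bullet> (H *v d)) 0)))"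

definition tau_update :: "real \<Rightarrow> real \<Rightarrow> ereal \<Rightarrow> real" where
  "tau_update eps_tau tau_prev ttrial =
     (if ereal tau_prev \<le> ttrial then tau_prev
      else min ((1 - eps_tau) * tau_prev) (real_of_ereal ttrial))"

definition phibar :: "(real^'n \<Rightarrow> 'xi \<Rightarrow> real) \<Rightarrow> (real^'n \<Rightarrow> real^'m) \<Rightarrow> real^'n \<Rightarrow> real \<Rightarrow> 'xi \<Rightarrow> real" where
  "phibar fbar c x tau xi = tau * fbar x xi + l1norm (c x)"

end

theory Submission
  imports Defs
begin

(* The update never lets tau exceed the trial value, which is either +infinity or positive:
   at a feasible iterate (c = 0) the step lies in the null space of J, so the first row of the
   linear system and the curvature condition give g'd + max(d'Hd, 0) <= 0 and the trial value
   is +infinity.  Hence tau stays positive, and tau <= trial value rearranges to the bound on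
   the model reduction. *)

lemma l1norm_nonneg: "l1norm (v::real^'m) \<ge> 0"
  unfolding l1norm_def by (simp add: sum_nonneg)

lemma l1norm_eq_0_iff: "l1norm (v::real^'m) = 0 \<longleftrightarrow> v = 0"
  unfolding l1norm_def by (simp add: sum_nonneg_eq_0_iff vec_eq_iff)

lemma saddle_point_system_inner:
  fixes H :: "real^'n^'n" and J :: "real^'n^'m"
  assumes "H *v d + transpose J *v y = - g" and "J *v d = - c"
  shows "g \<bullet> d + d \<bullet> (H *v d) = c \<bullet> y"
proof -
  have "d \<bullet> (transpose J *v y) = (J *v d) \<bullet> y"
    by (metis dot_lmul_matrix inner_commute transpose_matrix_vector)
  then show ?thesis
    using arg_cong[OF assms(1), of "\<lambda>v. d \<bullet> v"] assms(2)
    by (simp add: inner_add_right inner_commute)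
qed

lemma model_term_nonpos_if_feasible:
  fixes H :: "real^'n^'n" and J :: "real^'n^'m"
  assumes "H *v d + transpose J *v y = - g" and "J *v d = 0"
    and "\<And>u. J *v u = 0 \<Longrightarrow> zeta * (norm u)\<^sup>2 \<le> u \<bullet> (H *v u)" and "zeta \<ge> 0"
  shows "g \<bullet> d + max (d \<bullet> (H *v d)) 0 \<le> 0"
proof -
  have "d \<bullet> (H *v d) \<ge> 0"
    using assms(2-4) by (meson order_trans zero_le_mult_iff zero_le_power2)
  moreover have "g \<bullet> d + d \<bullet> (H *v d) = 0"
    using saddle_point_system_inner[OF assms(1)] assms(2) by simp
  ultimately show ?thesis by simp
qed

lemma tau_trial_pos:
  assumes "sig < 1" and "cn \<ge> 0"
    and "cn = 0 \<Longrightarrow> g \<bullet> d + max (d \<bullet> (H *v d)) 0 \<le> 0"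
  shows "tau_trial sig H g d cn > 0"
  using assms by (cases "cn = 0") (auto simp: tau_trial_def)

lemma tau_update_pos:
  assumes "prev > 0" and "eps < 1" and "ttrial > 0"
  shows "tau_update eps prev ttrial > 0"
  using assms by (cases ttrial) (auto simp: tau_update_def)

lemma tau_update_le_trial:
  assumes "eps > 0" and "prev > 0" and "ttrial > 0"
  shows "ereal (tau_update eps prev ttrial) \<le> ttrial"
  using assms by (cases ttrial) (auto simp: tau_update_def)

lemma tau_update_decrease:
  assumes "tau_update eps prev ttrial \<noteq> prev"
  shows "tau_update eps prev ttrial \<le> (1 - eps) * prev"
  using assms by (auto simp: tau_update_def)

lemma model_reduction_ge_if_le_tau_trial:
  assumes "t \<ge> 0" and "ereal t \<le> tau_trial sig H g d cn" and "cn \<ge> 0" and "sig \<le> 1"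
  shows "- t * (g \<bullet> d) + cn \<ge> t * max (d \<bullet> (H *v d)) 0 + sig * cn"
proof (cases "g \<bullet> d + max (d \<bullet> (H *v d)) 0 \<le> 0")
  case True
  then have "t * max (d \<bullet> (H *v d)) 0 \<le> t * - (g \<bullet> d)"
    using assms(1) by (intro mult_left_mono) auto
  moreover have "sig * cn \<le> cn"
    using assms(3,4) mult_right_mono[of sig 1 cn] by simp
  ultimately show ?thesis by simp
next
  case False
  then have "t * (g \<bullet> d + max (d \<bullet> (H *v d)) 0) \<le> (1 - sig) * cn"
    using assms(2) by (simp add: tau_trial_def pos_le_divide_eq)
  then show ?thesis by (simp add: algebra_simps)
qed

theorem lemma3p11:
  fixes f :: "real^'n \<Rightarrow> real" and grad_f :: "real^'n \<Rightarrow> real^'n"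
    and c :: "real^'n \<Rightarrow> real^'m" and Jc :: "real^'n \<Rightarrow> real^'n^'m"
    and X :: "(real^'n) set"
    and fbar :: "real^'n \<Rightarrow> 'xi \<Rightarrow> real" and xi0 xiplus :: "nat \<Rightarrow> 'xi"
    and x gbar d :: "nat \<Rightarrow> real^'n" and y :: "nat \<Rightarrow> real^'m"
    and H :: "nat \<Rightarrow> real^'n^'n"
    and tau alpha :: "nat \<Rightarrow> real"
    and tau_m1 alpha_max eps_f gamma theta sig eps_tau L kappa_H zeta :: real
  assumes m_le_n: "CARD('m) \<le> CARD('n)"
    \<comment> \<open>f, c continuously differentiable, with gradient of f and Jacobian of c\<close>
    and f_deriv: "\<And>z. (f has_derivative (\<lambda>h. grad_f z \<bullet> h)) (at z)"
    and c_deriv: "\<And>z. (c has_derivative (\<lambda>h. Jc z *v h)) (at z)"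
    and grad_f_cont: "continuous_on UNIV grad_f"
    and Jc_cont: "continuous_on UNIV Jc"
    \<comment> \<open>algorithm parameters\<close>
    and tau_m1_pos: "tau_m1 > 0"
    and alpha_max: "0 < alpha_max" "alpha_max \<le> 1"
    and alpha0: "0 < alpha 0" "alpha 0 \<le> alpha_max"
    and eps_f: "eps_f \<ge> 0"
    and gamma: "0 < gamma" "gamma < 1"
    and theta: "0 < theta" "theta < 1"
    and sig: "0 < sig" "sig < 1"
    and eps_tau: "0 < eps_tau" "eps_tau < 1"
    \<comment> \<open>Algorithm SS-SQP: linear system\<close>
    and sys1: "\<And>k. H k *v d k + transpose (Jc (x k)) *v y k = - gbar k"
    and sys2: "\<And>k. Jc (x k) *v d k = - c (x k)"
    \<comment> \<open>merit parameter update (tau_{-1} = tau_m1)\<close>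
    and tau_rule: "\<And>k. tau k = tau_update eps_tau (if k = 0 then tau_m1 else tau (k - 1))
                          (tau_trial sig (H k) (gbar k) (d k) (l1norm (c (x k))))"
    \<comment> \<open>step acceptance test\<close>
    and step_rule: "\<And>k.
       (phibar fbar c (x k + alpha k *\<^sub>R d k) (tau k) (xiplus k)
          \<le> phibar fbar c (x k) (tau k) (xi0 k)
             - alpha k * theta * Delta_l c (x k) (tau k) (gbar k) (d k) + 2 * tau k * eps_f
        \<longrightarrow> x (Suc k) = x k + alpha k *\<^sub>R d k \<and> alpha (Suc k) = min alpha_max (alpha k / gamma))
     \<and> (\<not> phibar fbar c (x k + alpha k *\<^sub>R d k) (tau k) (xiplus k)
          \<le> phibar fbar c (x k) (tau k) (xi0 k)
             - alpha k * theta * Delta_l c (x k) (tau k) (gbar k) (d k) + 2 * tau k * eps_f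
        \<longrightarrow> x (Suc k) = x k \<and> alpha (Suc k) = gamma * alpha k)"
    \<comment> \<open>(A1)\<close>
    and X_open: "open X" and X_convex: "convex X"
    and X_iter: "\<And>k. x k \<in> X" and X_trial: "\<And>k. x k + alpha k *\<^sub>R d k \<in> X"
    and f_bdd_below: "bdd_below (f ` X)"
    and grad_f_lip: "L-lipschitz_on X grad_f"
    and grad_f_bdd: "bounded (grad_f ` X)"
    and c_bdd: "bounded (c ` X)"
    and grad_ci_lip: "\<And>i. \<exists>Li. Li-lipschitz_on X (\<lambda>z. Jc z $ i)"
    and grad_ci_bdd: "\<And>i. bounded ((\<lambda>z. Jc z $ i) ` X)"
    and sing_vals: "\<exists>kappa>0. \<forall>z\<in>X. \<forall>v. kappa * norm v \<le> norm (transpose (Jc z) *v v)"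
    \<comment> \<open>(A2)\<close>
    and kappa_H: "kappa_H > 0" and zeta: "zeta > 0"
    and H_sym: "\<And>k. transpose (H k) = H k"
    and H_bdd: "\<And>k. onorm (\<lambda>v. H k *v v) \<le> kappa_H"
    and H_curv: "\<And>k u. Jc (x k) *v u = 0 \<Longrightarrow> u \<bullet> (H k *v u) \<ge> zeta * (norm u)\<^sup>2"
  shows "\<forall>k. Delta_l c (x k) (tau k) (gbar k) (d k)
               \<ge> tau k * max (d k \<bullet> (H k *v d k)) 0 + sig * l1norm (c (x k))
           \<and> (tau k \<noteq> (if k = 0 then tau_m1 else tau (k - 1))
               \<longrightarrow> 0 < tau k \<and> tau k \<le> (1 - eps_tau) * (if k = 0 then tau_m1 else tau (k - 1)))"
proof -
  define tau_prev where "tau_prev k = (if k = 0 then tau_m1 else tau (k - 1))" for k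
  define trial where "trial k = tau_trial sig (H k) (gbar k) (d k) (l1norm (c (x k)))" for k
  have tau_k: "tau k = tau_update eps_tau (tau_prev k) (trial k)" for k
    using tau_rule unfolding tau_prev_def trial_def .
  have feasible: "gbar k \<bullet> d k + max (d k \<bullet> (H k *v d k)) 0 \<le> 0"
    if "l1norm (c (x k)) = 0" for k
    using model_term_nonpos_if_feasible[OF sys1 _ H_curv] sys2[of k] that zeta
    by (simp add: l1norm_eq_0_iff)
  have trial_pos: "trial k > 0" for k
    unfolding trial_def using tau_trial_pos sig l1norm_nonneg feasible by blast
  have prev_pos: "tau_prev k > 0" for k
  proof (induction k)
    case 0
    then show ?case using tau_m1_pos by (simp add: tau_prev_def)
  next
    case (Suc k)
    then show ?case using tau_update_pos eps_tau trial_pos tau_k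
      by (simp add: tau_prev_def)
  qed
  have "Delta_l c (x k) (tau k) (gbar k) (d k)
          \<ge> tau k * max (d k \<bullet> (H k *v d k)) 0 + sig * l1norm (c (x k))" for k
    unfolding Delta_l_def
    using model_reduction_ge_if_le_tau_trial tau_update_pos tau_update_le_trial
      prev_pos trial_pos eps_tau sig l1norm_nonneg
    by (metis less_imp_le tau_k trial_def)
  moreover have "tau k \<noteq> tau_prev k \<longrightarrow> 0 < tau k \<and> tau k \<le> (1 - eps_tau) * tau_prev k" for k
    using tau_update_pos tau_update_decrease prev_pos trial_pos eps_tau tau_k by metis
  ultimately show ?thesis unfolding tau_prev_def by simp
qed

end
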